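(* For $n\ge1$ let $U_n(z)$ be the $n\times n$ matrix with entries $[U_n(z)]_{i,j}=z^{|i-j|}$, and let $\phi_n(x,z)=\det[U_n(z)-xI]$, with $\phi_0(x,z)=1$. Then $\phi_1(x,z)=1-x$ and for $n\ge2$ $$\phi_n(x,z)=\big(1-x-z^2(1+x)\big)\phi_{n-1}(x,z)-x^2z^2\phi_{n-2}(x,z).$$ *)

theory Defs
  imports "Jordan_Normal_Form.Determinant"
begin

definition U_mat :: "nat \<Rightarrow> 'a::comm_ring_1 \<Rightarrow> 'a mat" where
  "U_mat n z = mat n n (\<lambda>(i, j). z ^ nat \<bar>int i - int j\<bar>)"

definition phi :: "nat \<Rightarrow> 'a::comm_ring_1 \<Rightarrow> 'a \<Rightarrow> 'a" where
  "phi n x z = (if n = 0 then 1 else det (U_mat n z - x \<cdot>\<^sub>m 1\<^sub>m n))"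

end

theory Submission
  imports Defs
begin

text \<open>Subtracting z times the second row and column from the first row and column of
  U_n(z) - xI kills the first row and column beyond their first two entries (their tails are
  z times the tails of the second ones). Expanding along the first row and then along the
  first column of the remaining minor leaves the two trailing principal minors, which are
  again of the form U_k(z) - xI since the entries of U_n(z) depend only on i - j.\<close>

lemma laplace_first_row_two_terms:
  fixes A :: "'a::comm_ring_1 mat"
  assumes A: "A \<in> carrier_mat (Suc (Suc m)) (Suc (Suc m))"
    and row0: "\<And>j. 2 \<le> j \<Longrightarrow> j < Suc (Suc m) \<Longrightarrow> A $$ (0, j) = 0"
  shows "det A = A $$ (0, 0) * det (mat_delete A 0 0) - A $$ (0, 1) * det (mat_delete A 0 1)"
proof -
  have "det A = (\<Sum>j<Suc (Suc m). A $$ (0, j) * cofactor A 0 j)"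
    by (rule laplace_expansion_row[OF A]) simp
  also have "\<dots> = A $$ (0, 0) * cofactor A 0 0 + A $$ (0, 1) * cofactor A 0 1"
    by (simp add: sum.lessThan_Suc_shift row0 del: sum.lessThan_Suc)
  finally show ?thesis
    by (simp add: cofactor_def)
qed

lemma laplace_first_col_one_term:
  fixes A :: "'a::comm_ring_1 mat"
  assumes A: "A \<in> carrier_mat (Suc m) (Suc m)"
    and col0: "\<And>i. 0 < i \<Longrightarrow> i < Suc m \<Longrightarrow> A $$ (i, 0) = 0"
  shows "det A = A $$ (0, 0) * det (mat_delete A 0 0)"
proof -
  have "det A = (\<Sum>i<Suc m. A $$ (i, 0) * cofactor A i 0)"
    by (rule laplace_expansion_column[OF A]) simp
  also have "\<dots> = A $$ (0, 0) * cofactor A 0 0"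
    by (simp add: sum.lessThan_Suc_shift col0 del: sum.lessThan_Suc)
  finally show ?thesis
    by (simp add: cofactor_def)
qed

definition U_minus_diag :: "nat \<Rightarrow> 'a::comm_ring_1 \<Rightarrow> 'a \<Rightarrow> 'a mat" where
  "U_minus_diag n x z = mat n n (\<lambda>(i, j). z ^ nat \<bar>int i - int j\<bar> - (if i = j then x else 0))"

lemma U_minus_diag_carrier [simp]: "U_minus_diag n x z \<in> carrier_mat n n"
  by (simp add: U_minus_diag_def)

lemma U_minus_diag_dim [simp]:
  "dim_row (U_minus_diag n x z) = n" "dim_col (U_minus_diag n x z) = n"
  by (simp_all add: U_minus_diag_def)

lemma phi_eq_det_U_minus_diag: "phi n x z = det (U_minus_diag n x z)"
proof (cases "n = 0")
  case True
  then show ?thesis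
    by (simp add: phi_def U_minus_diag_def det_def)
next
  case False
  have "U_mat n z - x \<cdot>\<^sub>m 1\<^sub>m n = U_minus_diag n x z"
    by (rule eq_matI) (auto simp: U_mat_def U_minus_diag_def)
  with False show ?thesis
    by (simp add: phi_def)
qed

lemma U_minus_diag_index [simp]:
  "i < n \<Longrightarrow> j < n \<Longrightarrow>
    U_minus_diag n x z $$ (i, j) = z ^ nat \<bar>int i - int j\<bar> - (if i = j then x else 0)"
  by (simp add: U_minus_diag_def)

lemma U_minus_diag_eliminated_index:
  fixes x z :: "'a::comm_ring_1"
  assumes i: "i < Suc (Suc m)" and j: "j < Suc (Suc m)"
  shows "addrow (-z) 0 1 (addcol (-z) 0 1 (U_minus_diag (Suc (Suc m)) x z)) $$ (i, j) =
    (if i = 0 \<and> j = 0 then 1 - x - z^2 * (1 + x)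
     else if (i = 0 \<and> j = 1) \<or> (i = 1 \<and> j = 0) then x * z
     else if i = 0 \<or> j = 0 then 0
     else U_minus_diag (Suc (Suc m)) x z $$ (i, j))"
proof -
  have z_pow: "z ^ k = z * z ^ (k - 1)" if "0 < k" for k
    using that by (cases k) auto
  consider "i = 0" "j = 0" | "i = 0" "j = 1" | "i = 1" "j = 0" | "i = 0" "2 \<le> j"
    | "2 \<le> i" "j = 0" | "0 < i" "0 < j"
    by linarith
  then show ?thesis
  proof cases
    case 1
    then show ?thesis by (simp add: mat_addrow_def mat_addcol_def power2_eq_square algebra_simps)
  next
    case 2
    then show ?thesis by (simp add: mat_addrow_def mat_addcol_def algebra_simps)
  next
    case 3
    then show ?thesis by (simp add: mat_addrow_def mat_addcol_def algebra_simps)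
  next
    case 4
    then show ?thesis using j z_pow[of j] by (simp add: mat_addrow_def mat_addcol_def nat_diff_distrib')
  next
    case 5
    then show ?thesis using i z_pow[of i] by (simp add: mat_addrow_def mat_addcol_def nat_diff_distrib')
  next
    case 6
    then show ?thesis using i j by (simp add: mat_addrow_def mat_addcol_def)
  qed
qed

lemma det_U_minus_diag_recurrence:
  fixes x z :: "'a::comm_ring_1"
  shows "det (U_minus_diag (Suc (Suc m)) x z) =
    (1 - x - z^2 * (1 + x)) * det (U_minus_diag (Suc m) x z)
      - x^2 * z^2 * det (U_minus_diag m x z)"
proof -
  let ?A = "U_minus_diag (Suc (Suc m)) x z"
  define D where "D = addrow (-z) 0 1 (addcol (-z) 0 1 ?A)"
  define E where "E = mat_delete D 0 1"
  have addcol: "addcol (-z) 0 1 ?A \<in> carrier_mat (Suc (Suc m)) (Suc (Suc m))"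
    by (simp add: mat_addcol_def)
  then have D: "D \<in> carrier_mat (Suc (Suc m)) (Suc (Suc m))"
    by (simp add: D_def mat_addrow_def mat_addcol_def)
  then have dim_D: "dim_row D = Suc (Suc m)" "dim_col D = Suc (Suc m)"
    by auto
  have E: "E \<in> carrier_mat (Suc m) (Suc m)"
    using mat_delete_carrier[OF D] by (simp add: E_def)
  note D_index = U_minus_diag_eliminated_index[of _ m _ z x, folded D_def]
  have "det ?A = det (addcol (-z) 0 1 ?A)"
    by (rule det_addcol[OF _ _ U_minus_diag_carrier, symmetric]) simp_all
  also have "\<dots> = det D"
    unfolding D_def by (rule det_addrow[OF _ _ addcol, symmetric]) simp_all
  finally have det_A: "det ?A = det D" .
  have expand_D: "det D = (1 - x - z^2 * (1 + x)) * det (mat_delete D 0 0) - x * z * det E"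
    by (subst laplace_first_row_two_terms[OF D]) (simp_all add: D_index E_def)
  have minor_D: "mat_delete D 0 0 = U_minus_diag (Suc m) x z"
    by (rule eq_matI) (auto simp: dim_D mat_delete_def D_index)
  have "det E = E $$ (0, 0) * det (mat_delete E 0 0)"
    by (rule laplace_first_col_one_term[OF E]) (simp add: E_def mat_delete_def D_index dim_D)
  moreover have "E $$ (0, 0) = x * z"
    by (simp add: E_def mat_delete_def D_index dim_D)
  ultimately have expand_E: "det E = x * z * det (mat_delete E 0 0)"
    by simp
  have minor_E: "mat_delete E 0 0 = U_minus_diag m x z"
    by (rule eq_matI) (auto simp: E_def dim_D mat_delete_def D_index)
  show ?thesis
    unfolding det_A expand_D minor_D expand_E minor_E
    by (simp add: power2_eq_square algebra_simps)
qed

theorem lemma4p1: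
  fixes x z :: "'a::comm_ring_1"
  shows "phi 1 x z = 1 - x \<and>
    (\<forall>n\<ge>2. phi n x z = (1 - x - z^2 * (1 + x)) * phi (n - 1) x z - x^2 * z^2 * phi (n - 2) x z)"
proof (intro conjI allI impI)
  show "phi 1 x z = 1 - x"
    by (simp add: phi_eq_det_U_minus_diag det_def U_minus_diag_def)
next
  fix n :: nat
  assume "2 \<le> n"
  then obtain m where "n = Suc (Suc m)"
    using add_2_eq_Suc le_Suc_ex by blast
  then show "phi n x z = (1 - x - z^2 * (1 + x)) * phi (n - 1) x z - x^2 * z^2 * phi (n - 2) x z"
    by (simp add: phi_eq_det_U_minus_diag det_U_minus_diag_recurrence)
qed

end
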